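(* Let $\mathcal{G}_R$ be the class of all finite reflexive graphs and let $G\in\mathcal{G}_R$ be a reflexive graph not isomorphic to $N_{n,k}$ for any natural numbers $n,k$ with $2k\le n$. Then the class $\mathrm{Av}(G)=\{H\in\mathcal{G}_R: G\not\preceq H\}$, with respect to the strong homomorphic image ordering $\preceq$, is not well quasi-ordered.
   Context: A reflexive graph is a set with a symmetric edge relation having a loop at every vertex. A homomorphism maps edges to edges; it is strong if additionally every edge of the target between vertices of the image is the image of an edge. Strong homomorphic image ordering: $A\preceq B$ iff there is a surjective strong homomorphism $B\to A$. For $2k\le n$, $N_{n,k}$ is the reflexive graph on $\{1,\dots,n\}$ with all pairs of distinct vertices adjacent except $\{1,2\},\{3,4\},\dots,\{2k-1,2k\}$. Well quasi-ordered means no infinite strictly decreasing sequence and no infinite antichain; graphs considered up to isomorphism. *)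

theory Defs
  imports Main
begin

text \<open>A finite graph is represented by a vertex set of naturals and an edge relation
  on it (every finite graph is isomorphic to one of this form).\<close>
type_synonym rgraph = "nat set \<times> (nat \<Rightarrow> nat \<Rightarrow> bool)"

definition verts :: "rgraph \<Rightarrow> nat set" where "verts G = fst G"
definition edge :: "rgraph \<Rightarrow> nat \<Rightarrow> nat \<Rightarrow> bool" where "edge G = snd G"

definition reflexive_graph :: "rgraph \<Rightarrow> bool" where
  "reflexive_graph G \<longleftrightarrow> finite (verts G)
     \<and> (\<forall>x y. edge G x y \<longrightarrow> x \<in> verts G \<and> y \<in> verts G)
     \<and> (\<forall>x y. edge G x y \<longrightarrow> edge G y x)
     \<and> (\<forall>x \<in> verts G. edge G x x)"

definition hom :: "rgraph \<Rightarrow> rgraph \<Rightarrow> (nat \<Rightarrow> nat) \<Rightarrow> bool" where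
  "hom G H f \<longleftrightarrow> (\<forall>x \<in> verts G. f x \<in> verts H)
     \<and> (\<forall>x y. edge G x y \<longrightarrow> edge H (f x) (f y))"

definition strong_hom :: "rgraph \<Rightarrow> rgraph \<Rightarrow> (nat \<Rightarrow> nat) \<Rightarrow> bool" where
  "strong_hom G H f \<longleftrightarrow> hom G H f
     \<and> (\<forall>u \<in> f ` verts G. \<forall>v \<in> f ` verts G. edge H u v \<longrightarrow>
          (\<exists>x y. edge G x y \<and> f x = u \<and> f y = v))"

definition shi_le :: "rgraph \<Rightarrow> rgraph \<Rightarrow> bool" where
  "shi_le A B \<longleftrightarrow> (\<exists>f. strong_hom B A f \<and> f ` verts B = verts A)"

definition graph_iso :: "rgraph \<Rightarrow> rgraph \<Rightarrow> bool" where
  "graph_iso G H \<longleftrightarrow> (\<exists>f. bij_betw f (verts G) (verts H)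
     \<and> (\<forall>x \<in> verts G. \<forall>y \<in> verts G. edge G x y \<longleftrightarrow> edge H (f x) (f y)))"

definition N_graph :: "nat \<Rightarrow> nat \<Rightarrow> rgraph" where
  "N_graph n k = ({1..n}, \<lambda>x y. x \<in> {1..n} \<and> y \<in> {1..n}
       \<and> \<not> (\<exists>i \<in> {1..k}. {x, y} = {2*i - 1, 2*i}))"

definition wqo_class :: "(rgraph \<Rightarrow> rgraph \<Rightarrow> bool) \<Rightarrow> rgraph set \<Rightarrow> bool" where
  "wqo_class P C \<longleftrightarrow>
     \<not> (\<exists>s. (\<forall>i. s i \<in> C) \<and> (\<forall>i. P (s (Suc i)) (s i) \<and> \<not> P (s i) (s (Suc i))))
   \<and> \<not> (\<exists>s::nat \<Rightarrow> rgraph. (\<forall>i. s i \<in> C) \<and> (\<forall>i j. i \<noteq> j \<longrightarrow> \<not> P (s i) (s j)))"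

end

theory Submission
  imports Defs
begin

text \<open>A reflexive graph in which every vertex has at most one non-neighbour is isomorphic to
  some \<open>N_graph n k\<close>: peel off either a vertex adjacent to everything, which becomes
  vertex \<open>n + 1\<close>, or a non-adjacent pair, which becomes the pair \<open>{1, 2}\<close>. The property
  passes to images under surjective homomorphisms, so \<open>G\<close> lies below no \<open>N_graph n k\<close>
  and \<open>Av(G)\<close> contains every \<open>N_graph (2 * m) m\<close>. These form an infinite antichain: a
  surjective homomorphism between two of them is injective, because two vertices with the
  same image are both non-adjacent to a preimage of the partner of that image, hence equal.\<close>

definition removed_pair :: "nat \<Rightarrow> nat \<Rightarrow> nat \<Rightarrow> bool" where
  "removed_pair k a b \<longleftrightarrow> (\<exists>i\<in>{1..k}. {a, b} = {2*i - 1, 2*i})"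

lemma removed_pair_sym: "removed_pair k a b \<longleftrightarrow> removed_pair k b a"
  unfolding removed_pair_def by (simp add: insert_commute)

lemma removed_pair_irrefl: "\<not> removed_pair k a a"
  unfolding removed_pair_def by (auto simp: doubleton_eq_iff)

lemma removed_pair_unique: "removed_pair k a b \<Longrightarrow> removed_pair k a c \<Longrightarrow> b = c"
  unfolding removed_pair_def by (auto simp: doubleton_eq_iff; presburger)

lemma removed_pair_bounds: "removed_pair k a b \<Longrightarrow> 1 \<le> a \<and> a \<le> 2*k"
  unfolding removed_pair_def by (auto simp: doubleton_eq_iff)

lemma removed_pair_Suc_1: "removed_pair (Suc k) 1 b \<longleftrightarrow> b = 2"
  unfolding removed_pair_def by (auto simp: doubleton_eq_iff intro: bexI[of _ 1])

lemma removed_pair_Suc_2: "removed_pair (Suc k) 2 b \<longleftrightarrow> b = 1"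
  unfolding removed_pair_def by (auto simp: doubleton_eq_iff intro: bexI[of _ 1]; presburger)

lemma removed_pair_Suc_add_2: "removed_pair (Suc k) (a + 2) (b + 2) \<longleftrightarrow> removed_pair k a b"
proof
  assume "removed_pair (Suc k) (a + 2) (b + 2)"
  then obtain i where "i \<in> {1..Suc k}" "{a + 2, b + 2} = {2*i - 1, 2*i}"
    unfolding removed_pair_def by blast
  then have "i - 1 \<in> {1..k}" "{a, b} = {2 * (i - 1) - 1, 2 * (i - 1)}"
    unfolding doubleton_eq_iff by auto
  then show "removed_pair k a b"
    unfolding removed_pair_def by blast
next
  assume "removed_pair k a b"
  then obtain i where "i \<in> {1..k}" "{a, b} = {2*i - 1, 2*i}"
    unfolding removed_pair_def by blast
  then have "Suc i \<in> {1..Suc k}" "{a + 2, b + 2} = {2 * Suc i - 1, 2 * Suc i}"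
    unfolding doubleton_eq_iff by auto
  then show "removed_pair (Suc k) (a + 2) (b + 2)"
    unfolding removed_pair_def by blast
qed

lemma removed_pair_partner:
  assumes "a \<in> {1..2*k}"
  shows "\<exists>b\<in>{1..2*k}. removed_pair k a b"
proof (cases "even a")
  case True
  then obtain i where "a = 2 * i" ..
  with assms have "i \<in> {1..k}" "a - 1 \<in> {1..2*k}" "{a, a - 1} = {2*i - 1, 2*i}"
    by auto
  then show ?thesis
    unfolding removed_pair_def by blast
next
  case False
  then obtain i where "a = 2 * i + 1" by (blast elim: oddE)
  moreover from assms this have "i < k" by auto
  ultimately have "Suc i \<in> {1..k}" "a + 1 \<in> {1..2*k}" "{a, a + 1} = {2 * Suc i - 1, 2 * Suc i}"
    using assms by auto
  then show ?thesis
    unfolding removed_pair_def by blast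
qed

lemma verts_pair [simp]: "verts (V, E) = V"
  by (simp add: verts_def)

lemma edge_pair [simp]: "edge (V, E) = E"
  by (simp add: edge_def)

lemma reflexive_graph_imp_reflp_on: "reflexive_graph G \<Longrightarrow> reflp_on (verts G) (edge G)"
  unfolding reflexive_graph_def reflp_on_def by blast

lemma reflexive_graph_imp_symp_on: "reflexive_graph G \<Longrightarrow> symp_on (verts G) (edge G)"
  unfolding reflexive_graph_def symp_on_def by blast

lemma verts_N_graph [simp]: "verts (N_graph n k) = {1..n}"
  by (simp add: N_graph_def)

lemma edge_N_graph: "edge (N_graph n k) x y \<longleftrightarrow> x \<in> {1..n} \<and> y \<in> {1..n} \<and> \<not> removed_pair k x y"
  by (simp add: N_graph_def removed_pair_def)

lemma reflexive_graph_N_graph: "reflexive_graph (N_graph n k)"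
  unfolding reflexive_graph_def edge_N_graph using removed_pair_sym removed_pair_irrefl by auto

definition at_most_one_non_neighbour :: "rgraph \<Rightarrow> bool" where
  "at_most_one_non_neighbour G \<longleftrightarrow> (\<forall>x\<in>verts G. \<forall>y\<in>verts G. \<forall>z\<in>verts G.
     \<not> edge G x y \<longrightarrow> \<not> edge G x z \<longrightarrow> y = z)"

lemma at_most_one_non_neighbour_N_graph: "at_most_one_non_neighbour (N_graph n k)"
  using removed_pair_unique by (auto simp: at_most_one_non_neighbour_def edge_N_graph)

lemma at_most_one_non_neighbour_hom_image:
  assumes hom: "hom B A f" and onto: "f ` verts B = verts A"
    and B: "at_most_one_non_neighbour B"
  shows "at_most_one_non_neighbour A"
  unfolding at_most_one_non_neighbour_def
proof (intro ballI impI)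
  fix u v w assume "u \<in> verts A" "v \<in> verts A" "w \<in> verts A" and uv: "\<not> edge A u v" "\<not> edge A u w"
  then obtain x y z where xyz: "x \<in> verts B" "y \<in> verts B" "z \<in> verts B" "u = f x" "v = f y" "w = f z"
    using onto by (metis imageE)
  with uv hom have "\<not> edge B x y" "\<not> edge B x z"
    unfolding hom_def by blast+
  with B xyz show "v = w"
    unfolding at_most_one_non_neighbour_def by metis
qed

lemma edge_iff_ne_non_neighbour:
  assumes "at_most_one_non_neighbour G" "x \<in> verts G" "y \<in> verts G" "\<not> edge G x y"
  shows "\<forall>z\<in>verts G. edge G x z \<longleftrightarrow> z \<noteq> y"
  using assms unfolding at_most_one_non_neighbour_def by blast

lemma graph_iso_N_graph_iff:
  "graph_iso G (N_graph n k) \<longleftrightarrow> (\<exists>f. bij_betw f (verts G) {1..n}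
     \<and> (\<forall>x\<in>verts G. \<forall>y\<in>verts G. edge G x y \<longleftrightarrow> \<not> removed_pair k (f x) (f y)))"
  unfolding graph_iso_def edge_N_graph verts_N_graph by (metis bij_betwE)

lemma graph_iso_N_graph_insert_universal:
  assumes iso: "graph_iso (V - {s}, E) (N_graph n k)" and "2 * k \<le> n"
    and s: "s \<in> V" "\<forall>y\<in>V. E s y \<and> E y s"
  shows "graph_iso (V, E) (N_graph (Suc n) k)"
proof -
  obtain g where g: "bij_betw g (V - {s}) {1..n}"
    and g_edge: "\<forall>x\<in>V - {s}. \<forall>y\<in>V - {s}. E x y \<longleftrightarrow> \<not> removed_pair k (g x) (g y)"
    using iso unfolding graph_iso_N_graph_iff by auto
  define f where "f x = (if x \<in> V - {s} then g x else Suc n)" for x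
  have "bij_betw f ((V - {s}) \<union> {s}) ({1..n} \<union> {Suc n})"
    unfolding f_def by (rule bij_betw_disjoint_Un[OF g]) (auto simp: bij_betw_def)
  moreover have "(V - {s}) \<union> {s} = V" "{1..n} \<union> {Suc n} = {1..Suc n}"
    using s by auto
  ultimately have "bij_betw f V {1..Suc n}"
    by simp
  moreover have "\<not> removed_pair k (Suc n) b" "\<not> removed_pair k b (Suc n)" for b
    using removed_pair_bounds removed_pair_sym \<open>2 * k \<le> n\<close> by (metis not_less_eq_eq)+
  then have "E x y \<longleftrightarrow> \<not> removed_pair k (f x) (f y)" if "x \<in> V" "y \<in> V" for x y
    using that s g_edge unfolding f_def by auto
  ultimately show ?thesis
    unfolding graph_iso_N_graph_iff by auto
qed

lemma graph_iso_N_graph_insert_pair: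
  assumes iso: "graph_iso (V - {u, v}, E) (N_graph n k)"
    and uv: "u \<in> V" "v \<in> V" "u \<noteq> v" and sym: "symp_on V E"
    and u: "\<forall>y\<in>V. E u y \<longleftrightarrow> y \<noteq> v" and v: "\<forall>y\<in>V. E v y \<longleftrightarrow> y \<noteq> u"
  shows "graph_iso (V, E) (N_graph (n + 2) (Suc k))"
proof -
  obtain g where g: "bij_betw g (V - {u, v}) {1..n}"
    and g_edge: "\<forall>x\<in>V - {u, v}. \<forall>y\<in>V - {u, v}. E x y \<longleftrightarrow> \<not> removed_pair k (g x) (g y)"
    using iso unfolding graph_iso_N_graph_iff by auto
  define f where "f x = (if x \<in> V - {u, v} then g x + 2 else if x = u then 1 else 2)" for x
  have "bij_betw (\<lambda>m. m + 2) {1..n} {3..n + 2}"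
    unfolding bij_betw_def image_add_atLeastAtMost' by (simp add: inj_on_def)
  with g have "bij_betw (\<lambda>x. g x + 2) (V - {u, v}) {3..n + 2}"
    using bij_betw_trans by (fastforce simp: comp_def)
  moreover have "bij_betw (\<lambda>x. if x = u then 1 else 2) {u, v} {1, 2::nat}"
    using uv by (auto simp: bij_betw_def inj_on_def)
  ultimately have "bij_betw f ((V - {u, v}) \<union> {u, v}) ({3..n + 2} \<union> {1, 2})"
    unfolding f_def by (rule bij_betw_disjoint_Un) auto
  moreover have "(V - {u, v}) \<union> {u, v} = V" "{3..n + 2} \<union> {1, 2} = {1..n + 2}"
    using uv by auto
  ultimately have bij: "bij_betw f V {1..n + 2}"
    by simp
  have f_uv: "f u = 1" "f v = 2"
    using uv by (simp_all add: f_def)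
  have f_eq_uv: "f y = 1 \<longleftrightarrow> y = u" "f y = 2 \<longleftrightarrow> y = v" if "y \<in> V" for y
    using bij_betw_imp_inj_on[OF bij] that uv f_uv by (metis inj_on_eq_iff)+
  have edge_uv: "E x y \<longleftrightarrow> \<not> removed_pair (Suc k) (f x) (f y)" if "x \<in> {u, v}" "y \<in> V" for x y
    using that u v f_uv f_eq_uv removed_pair_Suc_1 removed_pair_Suc_2 by auto
  have "E x y \<longleftrightarrow> \<not> removed_pair (Suc k) (f x) (f y)" if xy: "x \<in> V" "y \<in> V" for x y
  proof -
    consider "x \<in> {u, v}" | "y \<in> {u, v}" | "x \<in> V - {u, v}" "y \<in> V - {u, v}"
      using xy by blast
    then show ?thesis
    proof cases
      case 1
      then show ?thesis using edge_uv xy by blast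
    next
      case 2
      then show ?thesis
        using edge_uv[of y x] xy sym removed_pair_sym by (metis symp_onD)
    next
      case 3
      then show ?thesis
        using g_edge removed_pair_Suc_add_2 by (simp add: f_def)
    qed
  qed
  with bij show ?thesis
    unfolding graph_iso_N_graph_iff by auto
qed

lemma graph_iso_N_graph_if_at_most_one_non_neighbour:
  assumes "finite V" "reflp_on V E" "symp_on V E" "at_most_one_non_neighbour (V, E)"
  shows "\<exists>n k. 2 * k \<le> n \<and> graph_iso (V, E) (N_graph n k)"
  using assms
proof (induction V rule: finite_psubset_induct)
  case (psubset V)
  have IH: "\<exists>n k. 2 * k \<le> n \<and> graph_iso (W, E) (N_graph n k)" if "W \<subset> V" for W
  proof (rule psubset.IH[OF that])
    show "reflp_on W E" "symp_on W E"
      using psubset.prems that reflp_on_subset symp_on_subset by blast+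
    show "at_most_one_non_neighbour (W, E)"
      using psubset.prems(3) that unfolding at_most_one_non_neighbour_def by auto
  qed
  consider "V = {}" | s where "s \<in> V" "\<forall>y\<in>V. E s y" | u v where "u \<in> V" "v \<in> V" "\<not> E u v"
    by blast
  then show ?case
  proof cases
    case 1
    then show ?thesis
      by (intro exI[of _ 0]) (simp add: graph_iso_def bij_betw_def)
  next
    case (2 s)
    then obtain n k where "2 * k \<le> n" "graph_iso (V - {s}, E) (N_graph n k)"
      using IH[of "V - {s}"] by blast
    moreover have "\<forall>y\<in>V. E s y \<and> E y s"
      using 2 psubset.prems(2) by (metis symp_onD)
    ultimately show ?thesis
      using graph_iso_N_graph_insert_universal 2 by (metis le_SucI)
  next
    case (3 u v)
    have "u \<noteq> v"
      using 3 psubset.prems(1) by (metis reflp_onD)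
    have "\<not> E v u"
      using 3 psubset.prems(2) by (metis symp_onD)
    then have "\<forall>y\<in>V. E u y \<longleftrightarrow> y \<noteq> v" "\<forall>y\<in>V. E v y \<longleftrightarrow> y \<noteq> u"
      using edge_iff_ne_non_neighbour[OF psubset.prems(3), of u v]
        edge_iff_ne_non_neighbour[OF psubset.prems(3), of v u] 3
      by simp_all
    moreover obtain n k where "2 * k \<le> n" "graph_iso (V - {u, v}, E) (N_graph n k)"
      using IH[of "V - {u, v}"] 3 by blast
    ultimately show ?thesis
      using graph_iso_N_graph_insert_pair[of V u v E n k] 3 \<open>u \<noteq> v\<close> psubset.prems(2)
      by (intro exI[of _ "n + 2"] exI[of _ "Suc k"]) simp
  qed
qed

lemma graph_iso_N_graph_if_shi_le_N_graph:
  assumes G: "reflexive_graph G" and "shi_le G (N_graph m j)"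
  shows "\<exists>n k. 2 * k \<le> n \<and> graph_iso G (N_graph n k)"
proof -
  obtain f where "hom (N_graph m j) G f" "f ` verts (N_graph m j) = verts G"
    using assms(2) unfolding shi_le_def strong_hom_def by blast
  then have "at_most_one_non_neighbour (verts G, edge G)"
    using at_most_one_non_neighbour_hom_image at_most_one_non_neighbour_N_graph
    by (simp add: verts_def edge_def)
  moreover have "finite (verts G)"
    using G unfolding reflexive_graph_def by blast
  ultimately show ?thesis
    using graph_iso_N_graph_if_at_most_one_non_neighbour[of "verts G" "edge G"]
      reflexive_graph_imp_reflp_on[OF G] reflexive_graph_imp_symp_on[OF G]
    by (simp add: verts_def edge_def)
qed

lemma inj_on_hom_onto_if_no_universal_vertex:
  assumes H: "symp_on (verts H) (edge H)" "at_most_one_non_neighbour H"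
    and f: "hom H A f" "f ` verts H = verts A"
    and no_universal: "\<forall>u\<in>verts A. \<exists>w\<in>verts A. \<not> edge A u w"
  shows "inj_on f (verts H)"
proof (rule inj_onI)
  fix x y assume xy: "x \<in> verts H" "y \<in> verts H" "f x = f y"
  obtain w where w: "w \<in> verts A" "\<not> edge A (f x) w"
    using no_universal f(2) xy(1) by blast
  then obtain z where z: "z \<in> verts H" "f z = w"
    using f(2) by (metis imageE)
  have "\<not> edge H x z" "\<not> edge H y z"
    using f(1) w(2) z(2) xy(3) unfolding hom_def by metis+
  then have "\<not> edge H z x" "\<not> edge H z y"
    using H(1) xy z(1) by (metis symp_onD)+
  then show "x = y"
    using H(2) z(1) xy unfolding at_most_one_non_neighbour_def by blast
qed

lemma shi_le_perfect_N_graph_imp_eq: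
  assumes "shi_le (N_graph (2 * m) m) (N_graph (2 * m') m')"
  shows "m = m'"
proof -
  obtain f where f: "hom (N_graph (2 * m') m') (N_graph (2 * m) m) f"
    "f ` verts (N_graph (2 * m') m') = verts (N_graph (2 * m) m)"
    using assms unfolding shi_le_def strong_hom_def by blast
  have "\<forall>u\<in>verts (N_graph (2 * m) m). \<exists>w\<in>verts (N_graph (2 * m) m). \<not> edge (N_graph (2 * m) m) u w"
    using removed_pair_partner by (auto simp: edge_N_graph)
  then have "inj_on f {1..2 * m'}"
    using inj_on_hom_onto_if_no_universal_vertex[OF _ at_most_one_non_neighbour_N_graph f]
      reflexive_graph_imp_symp_on[OF reflexive_graph_N_graph]
    by simp
  then have "card {1..2 * m} = card {1..2 * m'}"
    using f(2) card_image by fastforce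
  then show ?thesis
    by simp
qed

theorem theorem3p5:
  assumes "reflexive_graph G"
    and "\<forall>n k. 2 * k \<le> n \<longrightarrow> \<not> graph_iso G (N_graph n k)"
  shows "\<not> wqo_class shi_le {H. reflexive_graph H \<and> \<not> shi_le G H}"
proof -
  define s where "s m = N_graph (2 * m) m" for m
  have "s m \<in> {H. reflexive_graph H \<and> \<not> shi_le G H}" for m
    using reflexive_graph_N_graph graph_iso_N_graph_if_shi_le_N_graph[OF assms(1)] assms(2)
    unfolding s_def by blast
  moreover have "\<not> shi_le (s i) (s j)" if "i \<noteq> j" for i j
    using shi_le_perfect_N_graph_imp_eq that unfolding s_def by blast
  ultimately show ?thesis
    unfolding wqo_class_def by blast
qed

end
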